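(* Let $m \ge n$ and let $\mathbf{A} \in \mathbb{R}^{m\times n}$ have rank $n$. Let $\mathbf{A} = \mathbf{Q}\mathbf{R}$ be its reduced QR decomposition, with $\mathbf{Q} \in \mathbb{R}^{m\times n}$ satisfying $\mathbf{Q}^T\mathbf{Q} = \mathbf{I}_n$ and $\mathbf{R}\in\mathbb{R}^{n\times n}$ upper triangular (hence invertible). Suppose $\mathbf{A}' \mapsto (\mathbf{Q}(\mathbf{A}'),\mathbf{R}(\mathbf{A}'))$ is a differentiable map, defined on a neighborhood of $\mathbf{A}$, giving such a decomposition $\mathbf{A}'=\mathbf{Q}(\mathbf{A}')\mathbf{R}(\mathbf{A}')$ for every $\mathbf{A}'$ in that neighborhood (e.g. the QR decomposition normalized so that $\mathbf{R}$ has positive diagonal). Let $\bar{\mathbf{Q}}\in\mathbb{R}^{m\times n}$ and $\bar{\mathbf{R}}\in\mathbb{R}^{n\times n}$ be arbitrary (upstream gradients). Then the reverse-mode gradient of $\mathbf{A}$ is $$\bar{\mathbf{A}} = \left[\bar{\mathbf{Q}} + \mathbf{Q}\,\mathrm{copyltu}(\mathbf{M})\right]\mathbf{R}^{-T},\qquad \mathbf{M} = \mathbf{R}\bar{\mathbf{R}}^T - \bar{\mathbf{Q}}^T\mathbf{Q}.$$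
   Context: Reverse-mode gradient: given a differentiable map $\mathbf{A}\mapsto(\mathbf{Q}(\mathbf{A}),\mathbf{R}(\mathbf{A}))$ and upstream matrices $\bar{\mathbf{Q}},\bar{\mathbf{R}}$ of the same shapes as $\mathbf{Q},\mathbf{R}$, the gradient $\bar{\mathbf{A}}$ is the unique matrix of the shape of $\mathbf{A}$ such that $\mathrm{Tr}(\bar{\mathbf{A}}^T d\mathbf{A}) = \mathrm{Tr}(\bar{\mathbf{Q}}^T d\mathbf{Q}) + \mathrm{Tr}(\bar{\mathbf{R}}^T d\mathbf{R})$ for every direction $d\mathbf{A}$, where $d\mathbf{Q}, d\mathbf{R}$ are the directional derivatives of $\mathbf{Q},\mathbf{R}$ at $\mathbf{A}$ in direction $d\mathbf{A}$. For a square matrix $\mathbf{M}$, $\mathrm{copyltu}(\mathbf{M})$ is the symmetric matrix with entries $\mathrm{copyltu}(\mathbf{M})_{ij} = \mathbf{M}_{\max(i,j),\min(i,j)}$ (the lower triangle of $\mathbf{M}$ copied to the upper triangle); equivalently $\mathrm{copyltu}(\mathbf{M}) = \mathrm{sym}(\mathbf{M}\circ\mathbf{E})$, where $\mathrm{sym}(\mathbf{B}) = (\mathbf{B}+\mathbf{B}^T)/2$, $\circ$ is the entrywise (Hadamard) product, and $\mathbf{E}$ is the matrix with $e_{ij}=0$ if $i<j$, $e_{ij}=1$ if $i=j$, $e_{ij}=2$ if $i>j$. $\mathbf{R}^{-T}$ denotes $(\mathbf{R}^{-1})^T$. *)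

theory Defs
  imports "HOL-Analysis.Analysis"
begin

text \<open>Matrices are rendered as real^'n^'m (m rows indexed by 'm, n columns indexed by 'n).
  The column index type carries a linear order, identifying it with {1..n}.\<close>

definition upper_triangular :: "real^('n::{finite,linorder})^('n::{finite,linorder}) \<Rightarrow> bool" where
  "upper_triangular R \<longleftrightarrow> (\<forall>i j. j < i \<longrightarrow> R $ i $ j = 0)"

definition copyltu :: "real^('n::{finite,linorder})^('n::{finite,linorder}) \<Rightarrow> real^('n::{finite,linorder})^('n::{finite,linorder})" where
  "copyltu M = (\<chi> i j. M $ (max i j) $ (min i j))"

end

theory Submission imports Defs begin

text \<open>Differentiating \<open>A = Q R\<close> and \<open>Q\<^sup>T Q = I\<close> gives \<open>dA = Q dR + dQ R\<close> with
  \<open>Q\<^sup>T dQ\<close> skew-symmetric and \<open>dR\<close> upper triangular. Substituting into \<open>Tr(Abar\<^sup>T dA)\<close> and writing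
  \<open>U = dR R\<^sup>-\<^sup>1\<close> (upper triangular), the term \<open>Tr(copyltu(M) U)\<close> equals \<open>Tr(M U)\<close> because only the
  lower triangle of \<open>M\<close> meets \<open>U\<close>, while \<open>Tr(copyltu(M) Q\<^sup>T dQ)\<close> vanishes as the trace of a
  symmetric times a skew-symmetric matrix; what remains is \<open>Tr(Qbar\<^sup>T dQ) + Tr(Rbar\<^sup>T dR)\<close>.\<close>

lemma bounded_bilinear_matrix_matrix_mult:
  "bounded_bilinear ((**) :: real^'n^'m \<Rightarrow> real^'p^'n \<Rightarrow> real^'p^'m)"
  unfolding bilinear_conv_bounded_bilinear[symmetric] bilinear_def linear_iff
  by (auto simp: vec_eq_iff matrix_matrix_mult_def sum.distrib sum_distrib_left algebra_simps)

lemma bounded_linear_transpose: "bounded_linear (transpose :: real^'n^'m \<Rightarrow> real^'m^'n)"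
  unfolding linear_conv_bounded_linear[symmetric] linear_iff
  by (auto simp: transpose_def vec_eq_iff)

lemmas matrix_mult_add_left = bounded_bilinear.add_left[OF bounded_bilinear_matrix_matrix_mult]
lemmas matrix_mult_add_right = bounded_bilinear.add_right[OF bounded_bilinear_matrix_matrix_mult]
lemmas matrix_mult_diff_left = bounded_bilinear.diff_left[OF bounded_bilinear_matrix_matrix_mult]

lemma transpose_add: "transpose (A + B) = transpose A + transpose (B :: 'a::plus^'n^'m)"
  by (simp add: transpose_def vec_eq_iff)

lemma trace_transpose: "trace (transpose A) = trace (A :: 'a::semiring_1^'n^'n)"
  by (simp add: trace_def transpose_def)

lemma has_derivative_unique_on_open:
  assumes "(f has_derivative f') (at x)" and "(g has_derivative g') (at x)"
    and "open S" and "x \<in> S" and "\<And>y. y \<in> S \<Longrightarrow> f y = g y"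
  shows "f' = g'"
proof -
  have "(f has_derivative g') (at x)"
    using has_derivative_transform_within_open[OF assms(2-4)] assms(5) by metis
  then show ?thesis
    using has_derivative_unique[OF assms(1)] by blast
qed

lemma permutes_exists_less:
  fixes p :: "'n::{finite,linorder} \<Rightarrow> 'n"
  assumes p: "p permutes UNIV" and "p \<noteq> id"
  shows "\<exists>i. p i < i"
proof (rule ccontr)
  assume "\<not> ?thesis"
  then have ge: "i \<le> p i" for i by (auto simp: not_less)
  let ?D = "{k. p k \<noteq> k}"
  define i where "i = Max ?D"
  have "i \<in> ?D"
    unfolding i_def using \<open>p \<noteq> id\<close> by (intro Max_in) auto
  then have lt: "i < p i" using ge[of i] by auto
  \<comment> \<open>\<open>p i\<close> is beyond the largest moved point, so it is fixed, contradicting injectivity.\<close>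
  have "p i \<notin> ?D"
    using lt Max_ge[of ?D "p i"] unfolding i_def[symmetric] by fastforce
  then have "p (p i) = p i" by simp
  then have "p i = i" using permutes_inj[OF p] by (meson injD)
  with lt show False by simp
qed

lemma det_upper_triangular:
  fixes R :: "real^('n::{finite,linorder})^('n::{finite,linorder})"
  assumes "upper_triangular R"
  shows "det R = (\<Prod>i\<in>UNIV. R $ i $ i)"
proof -
  have vanish: "\<forall>p \<in> {p. p permutes UNIV} - {id}. of_int (sign p) * (\<Prod>i\<in>UNIV. R $ i $ p i) = 0"
  proof
    fix p :: "'n \<Rightarrow> 'n" assume "p \<in> {p. p permutes UNIV} - {id}"
    then obtain i where "p i < i"
      using permutes_exists_less by blast
    then have "R $ i $ p i = 0"
      using assms by (simp add: upper_triangular_def)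
    then show "of_int (sign p) * (\<Prod>i\<in>UNIV. R $ i $ p i) = 0" by auto
  qed
  have "{id} \<subseteq> {p. p permutes (UNIV :: 'n set)}"
    by (simp add: permutes_id)
  from sum.mono_neutral_cong_left[OF finite_permutations[OF finite] this vanish]
  show ?thesis
    unfolding det_def by (simp add: sign_id)
qed

lemma upper_triangular_matrix_mult:
  fixes A B :: "real^('n::{finite,linorder})^('n::{finite,linorder})"
  assumes "upper_triangular A" "upper_triangular B"
  shows "upper_triangular (A ** B)"
  using assms unfolding upper_triangular_def matrix_matrix_mult_def
  by (auto intro!: sum.neutral) (metis mult_eq_0_iff not_le order.strict_trans1)

lemma upper_triangular_right_inverse:
  fixes R R' :: "real^('n::{finite,linorder})^('n::{finite,linorder})"
  assumes U: "upper_triangular R" and inv: "R ** R' = mat 1"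
  shows "upper_triangular R'"
  unfolding upper_triangular_def
proof (intro allI impI, rule ccontr)
  fix i j assume "j < i" and "R' $ i $ j \<noteq> 0"
  have "det R * det R' = 1"
    using inv by (metis det_I det_mul)
  then have "(\<Prod>l\<in>UNIV. R $ l $ l) \<noteq> 0"
    unfolding det_upper_triangular[OF U] by (metis mult_zero_left zero_neq_one)
  then have diag: "R $ l $ l \<noteq> 0" for l
    by (simp add: prod_zero_iff)
  \<comment> \<open>Row \<open>k\<close> of \<open>R R'\<close>, for the lowest nonzero entry \<open>k > j\<close> of column \<open>j\<close> of \<open>R'\<close>,
      picks out the single product \<open>R\<^sub>k\<^sub>k R'\<^sub>k\<^sub>j\<close>.\<close>
  let ?D = "{k. j < k \<and> R' $ k $ j \<noteq> 0}"
  define k where "k = Max ?D"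
  have kD: "k \<in> ?D"
    unfolding k_def using \<open>j < i\<close> \<open>R' $ i $ j \<noteq> 0\<close> by (intro Max_in) auto
  have below: "R' $ l $ j = 0" if "k < l" for l
    using Max_ge[of ?D l] kD that unfolding k_def[symmetric] by force
  have "R $ k $ l * R' $ l $ j = 0" if "l \<noteq> k" for l
    using U below that by (cases "l < k") (auto simp: upper_triangular_def)
  then have "(R ** R') $ k $ j = R $ k $ k * R' $ k $ j"
    by (simp add: matrix_matrix_mult_def sum.remove[of UNIV k] sum.neutral)
  moreover have "(R ** R') $ k $ j = 0"
    using inv kD by (auto simp: mat_def)
  ultimately show False
    using diag[of k] kD by simp
qed

lemma transpose_copyltu: "transpose (copyltu M) = copyltu M"
  by (simp add: copyltu_def transpose_def vec_eq_iff max.commute min.commute)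

lemma trace_copyltu_mult_upper_triangular:
  fixes M U :: "real^('n::{finite,linorder})^('n::{finite,linorder})"
  assumes "upper_triangular U"
  shows "trace (copyltu M ** U) = trace (M ** U)"
proof -
  have entrywise: "copyltu M $ k $ l * U $ l $ k = M $ k $ l * U $ l $ k" for k l
    using assms by (cases "l \<le> k") (auto simp: copyltu_def upper_triangular_def max_def min_def)
  show ?thesis
    by (simp add: trace_def matrix_matrix_mult_def entrywise)
qed

lemma trace_symmetric_mult_skew:
  fixes C X :: "real^'n^'n"
  assumes "transpose C = C" and "transpose X = - X"
  shows "trace (C ** X) = 0"
proof -
  have "trace (C ** X) = trace (transpose X ** transpose C)"
    by (simp only: matrix_transpose_mul[symmetric] trace_transpose)
  also have "\<dots> = - trace (X ** C)"
    using assms by (simp add: trace_def matrix_matrix_mult_def sum_negf)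
  also have "\<dots> = - trace (C ** X)"
    by (simp only: trace_mul_sym[of X C])
  finally show ?thesis by simp
qed

lemma qr_backprop_trace_identity:
  fixes Q Qbar dQ :: "real^('n::{finite,linorder})^('m::finite)"
    and R Rbar dR R' :: "real^('n::{finite,linorder})^('n::{finite,linorder})"
  assumes QQ: "transpose Q ** Q = mat 1"
    and RR': "R ** R' = mat 1" and R'R: "R' ** R = mat 1" and upper_R': "upper_triangular R'"
    and skew: "transpose Q ** dQ + transpose dQ ** Q = 0"
    and upper_dR: "upper_triangular dR"
  shows "trace (transpose ((Qbar + Q ** copyltu (R ** transpose Rbar - transpose Qbar ** Q))
                            ** transpose R') ** (Q ** dR + dQ ** R))
         = trace (transpose Qbar ** dQ) + trace (transpose Rbar ** dR)"
proof -
  define M where "M = R ** transpose Rbar - transpose Qbar ** Q"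
  define C where "C = copyltu M"
  define U where "U = dR ** R'"
  define X where "X = transpose Q ** dQ"
  define P where "P = transpose Qbar + C ** transpose Q"
  have "upper_triangular U"
    unfolding U_def using upper_dR upper_R' by (rule upper_triangular_matrix_mult)
  then have trace_CU: "trace (C ** U) = trace (M ** U)"
    unfolding C_def by (rule trace_copyltu_mult_upper_triangular)
  have "transpose X = - X"
    using skew unfolding X_def by (simp add: matrix_transpose_mul eq_neg_iff_add_eq_0 add.commute)
  then have trace_CX: "trace (C ** X) = 0"
    unfolding C_def by (intro trace_symmetric_mult_skew transpose_copyltu)
  have PQ: "P ** Q = transpose Qbar ** Q + C"
    by (simp only: P_def matrix_mult_add_left matrix_mul_assoc[symmetric] QQ matrix_mul_rid)
  have PdQ: "P ** dQ = transpose Qbar ** dQ + C ** X"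
    by (simp only: P_def X_def matrix_mult_add_left matrix_mul_assoc)
  have dA_R': "(Q ** dR + dQ ** R) ** R' = Q ** U + dQ"
    by (simp only: U_def matrix_mult_add_left matrix_mul_assoc[symmetric] RR' matrix_mul_rid)
  have "transpose ((Qbar + Q ** C) ** transpose R') = R' ** P"
    by (simp only: P_def matrix_transpose_mul transpose_transpose transpose_add C_def transpose_copyltu)
  then have "trace (transpose ((Qbar + Q ** C) ** transpose R') ** (Q ** dR + dQ ** R))
      = trace (P ** (Q ** U + dQ))"
    by (metis dA_R' matrix_mul_assoc trace_mul_sym)
  also have "\<dots> = trace ((transpose Qbar ** Q + C) ** U) + trace (transpose Qbar ** dQ + C ** X)"
    by (simp only: matrix_mult_add_right matrix_mul_assoc trace_add PQ PdQ)
  also have "\<dots> = trace ((R ** transpose Rbar) ** U) + trace (transpose Qbar ** dQ)"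
    by (simp add: matrix_mult_add_left trace_add trace_CU trace_CX M_def matrix_mult_diff_left trace_sub)
  also have "trace ((R ** transpose Rbar) ** U) = trace (transpose Rbar ** dR)"
    by (metis U_def R'R matrix_mul_assoc matrix_mul_rid trace_mul_sym)
  finally show ?thesis
    unfolding M_def[symmetric] C_def[symmetric] by simp
qed

context
  fixes A :: "real^('n::{finite,linorder})^('m::finite)"
    and Qf dQ :: "real^('n::{finite,linorder})^('m::finite) \<Rightarrow> real^('n::{finite,linorder})^('m::finite)"
    and Rf :: "real^('n::{finite,linorder})^('m::finite) \<Rightarrow> real^('n::{finite,linorder})^('n::{finite,linorder})"
    and dR :: "real^('n::{finite,linorder})^('m::finite) \<Rightarrow> real^('n::{finite,linorder})^('n::{finite,linorder})"
    and S :: "(real^('n::{finite,linorder})^('m::finite)) set"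
  assumes S: "open S" "A \<in> S"
    and QR: "\<forall>A'\<in>S. A' = Qf A' ** Rf A' \<and> transpose (Qf A') ** Qf A' = mat 1
                     \<and> upper_triangular (Rf A')"
    and dQ: "(Qf has_derivative dQ) (at A)"
    and dR: "(Rf has_derivative dR) (at A)"
begin

lemma qr_differential_product: "h = Qf A ** dR h + dQ h ** Rf A"
proof -
  have "((\<lambda>x. Qf x ** Rf x) has_derivative (\<lambda>h. Qf A ** dR h + dQ h ** Rf A)) (at A)"
    by (rule bounded_bilinear.FDERIV[OF bounded_bilinear_matrix_matrix_mult dQ dR])
  from has_derivative_unique_on_open[OF this has_derivative_ident S] QR
  show ?thesis by metis
qed

lemma qr_differential_skew: "transpose (Qf A) ** dQ h + transpose (dQ h) ** Qf A = 0"
proof -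
  have "((\<lambda>x. transpose (Qf x) ** Qf x) has_derivative
          (\<lambda>h. transpose (Qf A) ** dQ h + transpose (dQ h) ** Qf A)) (at A)"
    by (rule bounded_bilinear.FDERIV[OF bounded_bilinear_matrix_matrix_mult
          bounded_linear.has_derivative[OF bounded_linear_transpose dQ] dQ])
  from has_derivative_unique_on_open[OF this has_derivative_const[of "mat 1"] S] QR
  show ?thesis by metis
qed

lemma qr_differential_upper_triangular: "upper_triangular (dR h)"
  unfolding upper_triangular_def
proof (intro allI impI)
  fix i j :: "'n::{finite,linorder}" assume "j < i"
  have "bounded_linear (\<lambda>M::real^'n::{finite,linorder}^'n::{finite,linorder}. M $ i $ j)"
    using bounded_linear_compose[OF bounded_linear_vec_nth bounded_linear_vec_nth] .
  from bounded_linear.has_derivative[OF this dR]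
  have "((\<lambda>x. Rf x $ i $ j) has_derivative (\<lambda>h. dR h $ i $ j)) (at A)" .
  from has_derivative_unique_on_open[OF this has_derivative_const[of 0] S] QR \<open>j < i\<close>
  show "dR h $ i $ j = 0"
    by (metis upper_triangular_def)
qed

end

lemma invertible_right_factor_of_full_rank:
  fixes Q :: "real^'n::finite^'m::finite" and R :: "real^'n^'n"
  assumes "rank (Q ** R) = CARD('n)"
  shows "invertible R"
proof -
  have "rank R = CARD('n)"
    using assms rank_mul_le_right[of Q R] rank_bound[of R] by linarith
  then show ?thesis
    by (simp add: invertible_det_nz det_eq_0_rank)
qed

lemma matrix_inv_invertible:
  assumes "invertible (A :: 'a::semiring_1^'n^'n)"
  shows "A ** matrix_inv A = mat 1" and "matrix_inv A ** A = mat 1"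
  using someI_ex[OF assms[unfolded invertible_def]] unfolding matrix_inv_def by auto

theorem proposition1:
  fixes A Qbar :: "real^('n::{finite,linorder})^('m::finite)"
    and Rbar :: "real^('n::{finite,linorder})^('n::{finite,linorder})"
    and Qf :: "real^('n::{finite,linorder})^('m::finite) \<Rightarrow> real^('n::{finite,linorder})^('m::finite)"
    and Rf :: "real^('n::{finite,linorder})^('m::finite) \<Rightarrow> real^('n::{finite,linorder})^('n::{finite,linorder})"
    and dQ :: "real^('n::{finite,linorder})^('m::finite) \<Rightarrow> real^('n::{finite,linorder})^('m::finite)"
    and dR :: "real^('n::{finite,linorder})^('m::finite) \<Rightarrow> real^('n::{finite,linorder})^('n::{finite,linorder})"
    and S :: "(real^('n::{finite,linorder})^('m::finite)) set"
  assumes "card (UNIV :: 'n set) \<le> card (UNIV :: 'm set)"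
    and "rank A = card (UNIV :: 'n set)"
    and "open S" and "A \<in> S"
    and "\<forall>A'\<in>S. A' = Qf A' ** Rf A' \<and> transpose (Qf A') ** Qf A' = mat 1
                 \<and> upper_triangular (Rf A')"
    and "(Qf has_derivative dQ) (at A)"
    and "(Rf has_derivative dR) (at A)"
  shows "let Q = Qf A; R = Rf A;
             M = R ** transpose Rbar - transpose Qbar ** Q;
             Abar = (Qbar + Q ** copyltu M) ** transpose (matrix_inv R)
         in \<forall>dA. trace (transpose Abar ** dA)
                 = trace (transpose Qbar ** dQ dA) + trace (transpose Rbar ** dR dA)"
proof -
  note differential = qr_differential_product[OF assms(3-7)]
    qr_differential_skew[OF assms(3-7)] qr_differential_upper_triangular[OF assms(3-7)]
  have QR: "A = Qf A ** Rf A" and QQ: "transpose (Qf A) ** Qf A = mat 1"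
    and upper_R: "upper_triangular (Rf A)"
    using assms(4,5) by auto
  have "invertible (Rf A)"
    using assms(2) QR invertible_right_factor_of_full_rank by metis
  note inverse = matrix_inv_invertible[OF this]
  have "upper_triangular (matrix_inv (Rf A))"
    using upper_triangular_right_inverse[OF upper_R inverse(1)] .
  from qr_backprop_trace_identity[OF QQ inverse this differential(2,3)] differential(1)
  show ?thesis
    unfolding Let_def by metis
qed

end
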